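(* Let $\mathcal{X}$ be $\mathbb{E}^2$ or $\mathbb{H}^2$ and let $M$ be a locally-finite map in $\mathcal{X}$ with exactly one end such that $V(M)$ is a locally finite collection of vertices. Suppose $G\le\mathrm{Isom}(\mathcal{X})$ acts quasi-transitively on $M$. Then $G$ is a discrete group of isometries of $\mathcal{X}$.
   Context: A map $M$ in a surface $X$ is a (simple, connected, infinite) graph embedded in $X$: vertices are distinct points, edges are curves meeting only at common endpoints, and each face (component of the complement) is homeomorphic to an open disc. $M$ is locally-finite / has one end if its underlying graph does (ends = equivalence classes of rays, two rays equivalent if joined by infinitely many disjoint paths). $V(M)$ is a locally finite collection of vertices if every compact subset of $\mathcal{X}$ contains only finitely many vertices of $M$. A group $G\le\mathrm{Isom}(\mathcal{X})$ acts on $M$ if each $g\in G$ maps $M$ to itself with $g(V(M))=V(M)$ inducing a graph automorphism; it acts quasi-transitively if it has finitely many orbits on $V(M)$. *)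

theory Defs
  imports "HOL-Analysis.Analysis"
begin

text \<open>E^2 is modelled as the complex plane with the Euclidean metric; H^2 is modelled
as the Poincare disc (open unit disc in the complex plane) with the hyperbolic metric.
In both cases the metric topology coincides with the Euclidean (subspace) topology,
so topological notions (compactness, arcs, components, homeomorphism) are taken from
the ambient complex plane.\<close>

datatype geometry = Euclidean | Hyperbolic

definition hyp_dist :: "complex \<Rightarrow> complex \<Rightarrow> real" where
  "hyp_dist z w = arcosh (1 + 2 * (cmod (z - w))\<^sup>2 / ((1 - (cmod z)\<^sup>2) * (1 - (cmod w)\<^sup>2)))"

fun space :: "geometry \<Rightarrow> complex set" where
  "space Euclidean = UNIV"
| "space Hyperbolic = ball 0 1"

fun gdist :: "geometry \<Rightarrow> complex \<Rightarrow> complex \<Rightarrow> real" where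
  "gdist Euclidean z w = dist z w"
| "gdist Hyperbolic z w = hyp_dist z w"

text \<open>An isometry of X: a distance-preserving bijection of the space, taken to be the
identity outside the space (so that isometries are determined by their action on X).\<close>
definition isometry :: "geometry \<Rightarrow> (complex \<Rightarrow> complex) \<Rightarrow> bool" where
  "isometry X g \<longleftrightarrow> bij_betw g (space X) (space X)
     \<and> (\<forall>x\<in>space X. \<forall>y\<in>space X. gdist X (g x) (g y) = gdist X x y)
     \<and> (\<forall>x. x \<notin> space X \<longrightarrow> g x = x)"

definition isom_subgroup :: "geometry \<Rightarrow> (complex \<Rightarrow> complex) set \<Rightarrow> bool" where
  "isom_subgroup X G \<longleftrightarrow> (\<forall>g\<in>G. isometry X g) \<and> id \<in> G
     \<and> (\<forall>g\<in>G. \<forall>h\<in>G. g \<circ> h \<in> G)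
     \<and> (\<forall>g\<in>G. \<exists>h\<in>G. h \<circ> g = id)"

text \<open>Discreteness of G as a subset of Isom(X) with the compact-open topology
(= topology of uniform convergence on compact sets): every element g of G has a
basic neighbourhood {h. sup over K of d(h x, g x) < e} meeting G only in g.\<close>
definition discrete_isom_group :: "geometry \<Rightarrow> (complex \<Rightarrow> complex) set \<Rightarrow> bool" where
  "discrete_isom_group X G \<longleftrightarrow>
     (\<forall>g\<in>G. \<exists>K e. compact K \<and> K \<subseteq> space X \<and> e > 0 \<and>
        (\<forall>h\<in>G. (\<forall>x\<in>K. gdist X (h x) (g x) < e) \<longrightarrow> h = g))"

definition is_edge_curve :: "geometry \<Rightarrow> complex set \<Rightarrow> complex set \<Rightarrow> bool" where
  "is_edge_curve X V C \<longleftrightarrow> (\<exists>\<gamma>. arc \<gamma> \<and> path_image \<gamma> = C \<and> C \<subseteq> space X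
      \<and> pathstart \<gamma> \<in> V \<and> pathfinish \<gamma> \<in> V
      \<and> C \<inter> V = {pathstart \<gamma>, pathfinish \<gamma>})"

definition map_adj :: "complex set \<Rightarrow> complex set set \<Rightarrow> complex \<Rightarrow> complex \<Rightarrow> bool" where
  "map_adj V E u v \<longleftrightarrow> u \<noteq> v \<and> (\<exists>C\<in>E. C \<inter> V = {u, v})"

definition is_map :: "geometry \<Rightarrow> complex set \<Rightarrow> complex set set \<Rightarrow> bool" where
  "is_map X V E \<longleftrightarrow>
     V \<subseteq> space X
   \<and> (\<forall>C\<in>E. is_edge_curve X V C)
   \<and> (\<forall>C\<in>E. \<forall>C'\<in>E. C \<noteq> C' \<longrightarrow> C \<inter> C' \<subseteq> V)
   \<and> (\<forall>C\<in>E. \<forall>C'\<in>E. C \<noteq> C' \<longrightarrow> C \<inter> V \<noteq> C' \<inter> V)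
   \<and> infinite V
   \<and> (\<forall>u\<in>V. \<forall>v\<in>V. (map_adj V E)\<^sup>*\<^sup>* u v)
   \<and> (\<forall>F \<in> components (space X - (V \<union> \<Union>E)). F homeomorphic ball (0::complex) 1)"

definition locally_finite_graph :: "complex set \<Rightarrow> complex set set \<Rightarrow> bool" where
  "locally_finite_graph V E \<longleftrightarrow> (\<forall>v\<in>V. finite {w. map_adj V E v w})"

definition graph_ray :: "complex set \<Rightarrow> complex set set \<Rightarrow> (nat \<Rightarrow> complex) \<Rightarrow> bool" where
  "graph_ray V E r \<longleftrightarrow> inj r \<and> range r \<subseteq> V \<and> (\<forall>n. map_adj V E (r n) (r (Suc n)))"

definition graph_path :: "complex set \<Rightarrow> complex set set \<Rightarrow> complex list \<Rightarrow> bool" where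
  "graph_path V E p \<longleftrightarrow> p \<noteq> [] \<and> distinct p \<and> set p \<subseteq> V
     \<and> (\<forall>i. Suc i < length p \<longrightarrow> map_adj V E (p ! i) (p ! Suc i))"

definition rays_equiv :: "complex set \<Rightarrow> complex set set \<Rightarrow> (nat \<Rightarrow> complex) \<Rightarrow> (nat \<Rightarrow> complex) \<Rightarrow> bool" where
  "rays_equiv V E r1 r2 \<longleftrightarrow> (\<exists>P. infinite P
      \<and> (\<forall>p\<in>P. graph_path V E p \<and> hd p \<in> range r1 \<and> last p \<in> range r2)
      \<and> (\<forall>p\<in>P. \<forall>q\<in>P. p \<noteq> q \<longrightarrow> set p \<inter> set q = {}))"

definition one_ended :: "complex set \<Rightarrow> complex set set \<Rightarrow> bool" where
  "one_ended V E \<longleftrightarrow> (\<exists>r. graph_ray V E r)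
     \<and> (\<forall>r1 r2. graph_ray V E r1 \<longrightarrow> graph_ray V E r2 \<longrightarrow> rays_equiv V E r1 r2)"

definition locally_finite_vertices :: "geometry \<Rightarrow> complex set \<Rightarrow> bool" where
  "locally_finite_vertices X V \<longleftrightarrow> (\<forall>K. compact K \<and> K \<subseteq> space X \<longrightarrow> finite (K \<inter> V))"

definition acts_on_map :: "(complex \<Rightarrow> complex) set \<Rightarrow> complex set \<Rightarrow> complex set set \<Rightarrow> bool" where
  "acts_on_map G V E \<longleftrightarrow> (\<forall>g\<in>G. g ` V = V \<and> (\<lambda>C. g ` C) ` E = E)"

definition quasi_transitive :: "(complex \<Rightarrow> complex) set \<Rightarrow> complex set \<Rightarrow> complex set set \<Rightarrow> bool" where
  "quasi_transitive G V E \<longleftrightarrow> acts_on_map G V E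
     \<and> finite ((\<lambda>v. (\<lambda>g. g v) ` G) ` V)"

end

(* Under the map lift X into R^3, circles of X become plane sections of a quadric
   containing no line. Hence two circles with distinct centres meet in finitely many
   points, and a point is determined by its distances from a rigid triple u, v, p
   (one whose sphere normals are linearly independent), so an isometry fixing such a
   triple is the identity. Now take vertices u <> v and a rigid triple u, v, p. If h in G
   is close to g on {u, v, p}, then h u = g u and h v = g v because V is discrete; h p
   lies on the finite intersection of the circles about g u and g v through g p, so
   h p = g p, and rigidity gives h = g. *)

theory Submission
  imports Defs
begin

unbundle cross3_syntax

lemma one_minus_cmod_power2_pos: "cmod z < 1 \<Longrightarrow> 0 < 1 - (cmod z)\<^sup>2"
  by (simp add: abs_square_less_1)

lemma open_space: "open (space X)"
  by (cases X) simp_all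

lemma cosh_hyp_dist:
  assumes "cmod z < 1" "cmod w < 1"
  shows "cosh (hyp_dist z w) = 1 + 2 * (cmod (z - w))\<^sup>2 / ((1 - (cmod z)\<^sup>2) * (1 - (cmod w)\<^sup>2))"
  using one_minus_cmod_power2_pos[OF assms(1)] one_minus_cmod_power2_pos[OF assms(2)]
  by (simp add: hyp_dist_def)

lemma hyp_dist_nonneg: "cmod z < 1 \<Longrightarrow> cmod w < 1 \<Longrightarrow> 0 \<le> hyp_dist z w"
  using one_minus_cmod_power2_pos[of z] one_minus_cmod_power2_pos[of w]
  by (simp add: hyp_dist_def)

lemma isometry_maps_space: "isometry X g \<Longrightarrow> x \<in> space X \<Longrightarrow> g x \<in> space X"
  unfolding isometry_def bij_betw_def by auto

lemma isometry_gdist: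
  "isometry X g \<Longrightarrow> x \<in> space X \<Longrightarrow> y \<in> space X \<Longrightarrow> gdist X (g x) (g y) = gdist X x y"
  unfolding isometry_def by auto

lemma isometry_inj_on: "isometry X g \<Longrightarrow> inj_on g (space X)"
  unfolding isometry_def bij_betw_def by auto

lemma isometry_inj:
  assumes "isometry X g"
  shows "inj g"
proof (rule injI)
  fix x y assume eq: "g x = g y"
  have "g ` space X = space X" "\<forall>x. x \<notin> space X \<longrightarrow> g x = x"
    using assms unfolding isometry_def bij_betw_def by auto
  with eq isometry_inj_on[OF assms] show "x = y"
    by (cases "x \<in> space X"; cases "y \<in> space X") (auto dest: inj_onD)
qed

section \<open>Circles as plane sections of a quadric\<close>

text \<open>The squared Euclidean distance, resp. the cosh of the hyperbolic distance, from a is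
  an affine function of \<^term>\<open>sphere_normal X a \<bullet> lift X w\<close>. In the hyperbolic case
  \<^term>\<open>lift Hyperbolic\<close> is an affine image of the hyperboloid model.\<close>

fun lift :: "geometry \<Rightarrow> complex \<Rightarrow> real^3" where
  "lift Euclidean z = vector [(cmod z)\<^sup>2, Re z, Im z]"
| "lift Hyperbolic z = (1 / (1 - (cmod z)\<^sup>2)) *\<^sub>R vector [1, Re z, Im z]"

fun sphere_normal :: "geometry \<Rightarrow> complex \<Rightarrow> real^3" where
  "sphere_normal Euclidean a = vector [1, -2 * Re a, -2 * Im a]"
| "sphere_normal Hyperbolic a = vector [1 + (cmod a)\<^sup>2, -2 * Re a, -2 * Im a]"

lemma vec3_eq_0_iff: "(y::real^3) = 0 \<longleftrightarrow> y$1 = 0 \<and> y$2 = 0 \<and> y$3 = 0"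
  by (simp add: vec_eq_iff forall_3)

lemma inner_vector_3: "(vector [a, b, c] :: real^3) \<bullet> vector [x, y, z] = a * x + b * y + c * z"
  by (simp add: inner_vec_def sum_3)

lemma cmod_diff_power2: "(cmod (w - a))\<^sup>2 = (Re w - Re a)\<^sup>2 + (Im w - Im a)\<^sup>2"
  by (simp add: cmod_power2)

lemma dist_power2_eq_sphere_normal_inner_lift:
  "(dist w a)\<^sup>2 = sphere_normal Euclidean a \<bullet> lift Euclidean w + (cmod a)\<^sup>2"
  unfolding dist_norm
  by (simp only: lift.simps sphere_normal.simps inner_vector_3 cmod_diff_power2 cmod_power2)
    (simp add: power2_eq_square algebra_simps)

lemma cosh_hyp_dist_eq_sphere_normal_inner_lift:
  assumes "cmod w < 1" "cmod a < 1"
  shows "cosh (hyp_dist w a)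
    = 1 + 2 * (sphere_normal Hyperbolic a \<bullet> lift Hyperbolic w - 1) / (1 - (cmod a)\<^sup>2)"
proof -
  have "1 - (cmod w)\<^sup>2 \<noteq> 0"
    using one_minus_cmod_power2_pos[OF assms(1)] by simp
  then have "sphere_normal Hyperbolic a \<bullet> lift Hyperbolic w = (cmod (w - a))\<^sup>2 / (1 - (cmod w)\<^sup>2) + 1"
    by (simp only: lift.simps sphere_normal.simps inner_scaleR_right inner_vector_3
        cmod_diff_power2 cmod_power2) (simp add: field_simps power2_eq_square)
  then show ?thesis
    using assms by (simp add: cosh_hyp_dist)
qed

lemma equidistant_imp_sphere_normal_orthogonal:
  assumes "a \<in> space X" "z \<in> space X" "w \<in> space X" "gdist X w a = gdist X z a"
  shows "sphere_normal X a \<bullet> (lift X w - lift X z) = 0"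
proof (cases X)
  case Euclidean
  then have "(dist w a)\<^sup>2 = (dist z a)\<^sup>2"
    using assms(4) by simp
  then show ?thesis
    using Euclidean by (simp add: dist_power2_eq_sphere_normal_inner_lift inner_diff_right)
next
  case Hyperbolic
  let ?N = "sphere_normal Hyperbolic a"
  have w: "cmod w < 1" and z: "cmod z < 1" and a: "cmod a < 1"
    using assms(1-3) Hyperbolic by simp_all
  have "cosh (hyp_dist w a) = cosh (hyp_dist z a)"
    using assms(4) Hyperbolic by simp
  then have "1 + 2 * (?N \<bullet> lift Hyperbolic w - 1) / (1 - (cmod a)\<^sup>2)
      = 1 + 2 * (?N \<bullet> lift Hyperbolic z - 1) / (1 - (cmod a)\<^sup>2)"
    by (simp only: cosh_hyp_dist_eq_sphere_normal_inner_lift[OF w a]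
        cosh_hyp_dist_eq_sphere_normal_inner_lift[OF z a])
  moreover have "1 - (cmod a)\<^sup>2 \<noteq> 0"
    using one_minus_cmod_power2_pos[OF a] by simp
  ultimately have "?N \<bullet> lift Hyperbolic w = ?N \<bullet> lift Hyperbolic z"
    by (simp del: lift.simps sphere_normal.simps)
  then show ?thesis
    using Hyperbolic by (simp only: inner_diff_right)
qed

lemma inj_on_lift: "inj_on (lift X) (space X)"
proof (cases X)
  case Euclidean
  then show ?thesis
    by (auto simp: inj_on_def complex_eq_iff vec_eq_iff forall_3)
next
  case Hyperbolic
  show ?thesis
  proof (rule inj_onI)
    fix z w assume z: "z \<in> space X" and w: "w \<in> space X" and eq: "lift X z = lift X w"
    have "0 < 1 - (cmod z)\<^sup>2" "0 < 1 - (cmod w)\<^sup>2"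
      using z w Hyperbolic by (simp_all add: abs_square_less_1)
    moreover from eq have "1 / (1 - (cmod z)\<^sup>2) = 1 / (1 - (cmod w)\<^sup>2)"
      and "Re z / (1 - (cmod z)\<^sup>2) = Re w / (1 - (cmod w)\<^sup>2)"
      and "Im z / (1 - (cmod z)\<^sup>2) = Im w / (1 - (cmod w)\<^sup>2)"
      using Hyperbolic by (auto simp: vec_eq_iff forall_3)
    ultimately show "z = w"
      by (simp add: complex_eq_iff)
  qed
qed

fun lift_quadric :: "geometry \<Rightarrow> (real^3) set" where
  "lift_quadric Euclidean = {y. y$1 = (y$2)\<^sup>2 + (y$3)\<^sup>2}"
| "lift_quadric Hyperbolic = {y. (y$1)\<^sup>2 - (y$2)\<^sup>2 - (y$3)\<^sup>2 = y$1}"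

lemma lift_in_lift_quadric:
  assumes "z \<in> space X"
  shows "lift X z \<in> lift_quadric X"
proof (cases X)
  case Euclidean
  then show ?thesis
    by (simp add: cmod_power2)
next
  case Hyperbolic
  define s where "s = 1 - (cmod z)\<^sup>2"
  have s: "s \<noteq> 0"
    using assms Hyperbolic one_minus_cmod_power2_pos[of z] unfolding s_def by simp
  have "(1 / s)\<^sup>2 - (Re z / s)\<^sup>2 - (Im z / s)\<^sup>2 = (1 - ((Re z)\<^sup>2 + (Im z)\<^sup>2)) / s\<^sup>2"
    by (simp add: power_divide diff_divide_distrib add_divide_distrib)
  also have "\<dots> = 1 / s"
    using s unfolding s_def cmod_power2 by (simp add: power2_eq_square)
  finally show ?thesis
    using Hyperbolic unfolding s_def by simp
qed

lemma finite_roots_quadratic_through_0: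
  fixes a b :: real
  assumes "a \<noteq> 0 \<or> b \<noteq> 0"
  shows "finite {t. a * t\<^sup>2 + b * t = 0}"
proof (rule finite_subset)
  show "{t. a * t\<^sup>2 + b * t = 0} \<subseteq> {0, - b / a}"
  proof
    fix t assume "t \<in> {t. a * t\<^sup>2 + b * t = 0}"
    then have "t * (a * t + b) = 0"
      by (simp add: power2_eq_square algebra_simps)
    then consider "t = 0" | "a * t + b = 0"
      by auto
    then show "t \<in> {0, - b / a}"
    proof cases
      case 2
      with assms have "a \<noteq> 0"
        by auto
      with 2 show ?thesis
        by (simp add: field_simps)
    qed simp
  qed
qed simp

text \<open>The last hypothesis says that n is orthogonal to the gradient
  (2 p1 - 1, -2 p2, -2 p3) of the hyperboloid at p.\<close>

lemma hyperboloid_null_tangent_eq_0: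
  fixes p1 p2 p3 n1 n2 n3 :: real
  assumes p: "p1\<^sup>2 - p2\<^sup>2 - p3\<^sup>2 = p1" and null: "n1\<^sup>2 = n2\<^sup>2 + n3\<^sup>2"
    and tangent: "n1 * (2 * p1 - 1) = 2 * (p2 * n2 + p3 * n3)"
  shows "n1 = 0 \<and> n2 = 0 \<and> n3 = 0"
proof -
  have "(p2 * n2 + p3 * n3)\<^sup>2 + (p2 * n3 - p3 * n2)\<^sup>2 = (p2\<^sup>2 + p3\<^sup>2) * (n2\<^sup>2 + n3\<^sup>2)"
    by algebra
  also have "\<dots> = (p1\<^sup>2 - p1) * n1\<^sup>2"
    using p null by (simp add: algebra_simps)
  moreover have "(n1 * (2 * p1 - 1))\<^sup>2 = 4 * (p2 * n2 + p3 * n3)\<^sup>2"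
    unfolding tangent by algebra
  moreover have "(n1 * (2 * p1 - 1))\<^sup>2 = 4 * ((p1\<^sup>2 - p1) * n1\<^sup>2) + n1\<^sup>2"
    by (simp add: power2_eq_square algebra_simps)
  ultimately have "n1\<^sup>2 + 4 * (p2 * n3 - p3 * n2)\<^sup>2 = 0"
    by linarith
  then have "n1 = 0"
    by (simp add: add_nonneg_eq_0_iff)
  then show ?thesis
    using null by (simp add: add_nonneg_eq_0_iff)
qed

lemma finite_line_inter_lift_quadric:
  assumes p: "p \<in> lift_quadric X" and n: "n \<noteq> 0"
  shows "finite {t. p + t *\<^sub>R n \<in> lift_quadric X}"
proof -
  \<comment> \<open>as p lies on the quadric, the equation of \<^term>\<open>p + t *\<^sub>R n\<close> has no constant term\<close>
  obtain a b where ab: "a \<noteq> 0 \<or> b \<noteq> 0"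
    and roots: "\<And>t. p + t *\<^sub>R n \<in> lift_quadric X \<Longrightarrow> a * t\<^sup>2 + b * t = 0"
  proof (cases X)
    case Euclidean
    show ?thesis
    proof
      show "(n$2)\<^sup>2 + (n$3)\<^sup>2 \<noteq> 0 \<or> 2 * (p$2 * n$2 + p$3 * n$3) - n$1 \<noteq> 0"
        using n by (auto simp: vec3_eq_0_iff add_nonneg_eq_0_iff)
      show "((n$2)\<^sup>2 + (n$3)\<^sup>2) * t\<^sup>2 + (2 * (p$2 * n$2 + p$3 * n$3) - n$1) * t = 0"
        if "p + t *\<^sub>R n \<in> lift_quadric X" for t
        using that p Euclidean by (simp add: power2_eq_square algebra_simps)
    qed
  next
    case Hyperbolic
    show ?thesis
    proof
      show "(n$1)\<^sup>2 - (n$2)\<^sup>2 - (n$3)\<^sup>2 \<noteq> 0 \<or> 2 * (p$1 * n$1 - p$2 * n$2 - p$3 * n$3) - n$1 \<noteq> 0"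
        using n p Hyperbolic hyperboloid_null_tangent_eq_0[of "p$1" "p$2" "p$3" "n$1" "n$2" "n$3"]
        by (auto simp: vec3_eq_0_iff algebra_simps)
      show "((n$1)\<^sup>2 - (n$2)\<^sup>2 - (n$3)\<^sup>2) * t\<^sup>2 + (2 * (p$1 * n$1 - p$2 * n$2 - p$3 * n$3) - n$1) * t = 0"
        if "p + t *\<^sub>R n \<in> lift_quadric X" for t
        using that p Hyperbolic by (simp add: power2_eq_square algebra_simps)
    qed
  qed
  have "{t. p + t *\<^sub>R n \<in> lift_quadric X} \<subseteq> {t. a * t\<^sup>2 + b * t = 0}"
    using roots by blast
  then show ?thesis
    using finite_roots_quadratic_through_0[OF ab] by (rule finite_subset)
qed

lemma orthogonal_both_imp_parallel_cross:
  fixes a b x :: "real^3"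
  assumes "a \<bullet> x = 0" "b \<bullet> x = 0" and n: "a \<times> b \<noteq> 0"
  shows "x = ((a \<times> b) \<bullet> x / ((a \<times> b) \<bullet> (a \<times> b))) *\<^sub>R (a \<times> b)"
proof -
  let ?n = "a \<times> b"
  have "x \<times> ?n = 0"
    using assms by (simp add: Lagrange inner_commute)
  then have "?n \<times> x = 0"
    by (metis cross_skew neg_equal_0_iff_equal)
  then have parallel: "(?n \<bullet> ?n) *\<^sub>R x = (?n \<bullet> x) *\<^sub>R ?n"
    using Lagrange[of ?n ?n x] by simp
  have "?n \<bullet> ?n \<noteq> 0"
    using n by simp
  then have "x = inverse (?n \<bullet> ?n) *\<^sub>R ((?n \<bullet> ?n) *\<^sub>R x)"
    by simp
  also have "\<dots> = (?n \<bullet> x / (?n \<bullet> ?n)) *\<^sub>R ?n"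
    unfolding parallel by (simp add: divide_inverse_commute)
  finally show ?thesis .
qed

lemma sphere_normal_cross_nonzero:
  assumes u: "u \<in> space X" and v: "v \<in> space X" and uv: "u \<noteq> v"
  shows "sphere_normal X u \<times> sphere_normal X v \<noteq> 0"
proof
  assume cross0: "sphere_normal X u \<times> sphere_normal X v = 0"
  show False
  proof (cases X)
    case Euclidean
    then have "Re u = Re v" "Im u = Im v"
      using cross0 by (auto simp: vec3_eq_0_iff cross_components)
    with uv show False
      by (simp add: complex_eq_iff)
  next
    case Hyperbolic
    define A where "A = 1 + (cmod u)\<^sup>2"
    define B where "B = 1 + (cmod v)\<^sup>2"
    have AB: "A > 0" "B > 0"
      unfolding A_def B_def by (simp_all add: add_pos_nonneg)
    have scaled_eq: "of_real B * u = of_real A * v"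
      using cross0 Hyperbolic unfolding A_def B_def
      by (auto simp: vec3_eq_0_iff cross_components complex_eq_iff algebra_simps)
    then have "B * cmod u = A * cmod v"
      using AB by (metis abs_of_pos norm_mult norm_of_real)
    then have "(cmod u - cmod v) * (1 - cmod u * cmod v) = 0"
      unfolding A_def B_def by (simp add: algebra_simps power2_eq_square)
    moreover have "cmod u * cmod v < 1"
    proof -
      have "cmod u * cmod v \<le> cmod u"
        using v Hyperbolic by (simp add: mult_left_le)
      then show ?thesis
        using u Hyperbolic by simp
    qed
    ultimately have "A = B"
      unfolding A_def B_def by simp
    with scaled_eq AB show False
      using uv by simp
  qed
qed

lemma finite_two_circles_inter:
  assumes "a \<in> space X" "b \<in> space X" "a \<noteq> b"
  shows "finite {w \<in> space X. gdist X w a = r \<and> gdist X w b = s}" (is "finite ?C")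
proof (cases "?C = {}")
  case False
  then obtain p where p: "p \<in> ?C"
    by blast
  let ?n = "sphere_normal X a \<times> sphere_normal X b"
  have n: "?n \<noteq> 0"
    using sphere_normal_cross_nonzero assms by blast
  have "lift X ` ?C \<subseteq> (\<lambda>t. lift X p + t *\<^sub>R ?n) ` {t. lift X p + t *\<^sub>R ?n \<in> lift_quadric X}"
  proof
    fix y assume "y \<in> lift X ` ?C"
    then obtain w where w: "w \<in> ?C" and y: "y = lift X w"
      by blast
    define t where "t = ?n \<bullet> (lift X w - lift X p) / (?n \<bullet> ?n)"
    have "lift X w - lift X p = t *\<^sub>R ?n"
      unfolding t_def using w p assms
      by (intro orthogonal_both_imp_parallel_cross n equidistant_imp_sphere_normal_orthogonal) auto
    then have "y = lift X p + t *\<^sub>R ?n"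
      unfolding y by (simp add: algebra_simps)
    moreover have "y \<in> lift_quadric X"
      using w y lift_in_lift_quadric by blast
    ultimately show "y \<in> (\<lambda>t. lift X p + t *\<^sub>R ?n) ` {t. lift X p + t *\<^sub>R ?n \<in> lift_quadric X}"
      by blast
  qed
  moreover have "finite {t. lift X p + t *\<^sub>R ?n \<in> lift_quadric X}"
    using p lift_in_lift_quadric n by (intro finite_line_inter_lift_quadric) auto
  ultimately have "finite (lift X ` ?C)"
    by (meson finite_imageI finite_subset)
  moreover have "inj_on (lift X) ?C"
    using inj_on_lift by (rule inj_on_subset) blast
  ultimately show ?thesis
    by (rule finite_imageD)
qed (metis finite.emptyI)

section \<open>Rigidity\<close>

definition rigid_triple :: "geometry \<Rightarrow> complex \<Rightarrow> complex \<Rightarrow> complex \<Rightarrow> bool" where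
  "rigid_triple X u v p \<longleftrightarrow> u \<in> space X \<and> v \<in> space X \<and> p \<in> space X
     \<and> sphere_normal X p \<bullet> (sphere_normal X u \<times> sphere_normal X v) \<noteq> 0"

lemma sphere_normals_span:
  assumes "\<forall>p \<in> {0, 1/2, \<i>/2}. sphere_normal X p \<bullet> n = 0"
  shows "n = 0"
  using assms by (cases X) (auto simp: inner_vec_def sum_3 vec3_eq_0_iff norm_divide)

lemma rigid_triple_exists:
  assumes "u \<in> space X" "v \<in> space X" "u \<noteq> v"
  shows "\<exists>p. rigid_triple X u v p"
proof (rule ccontr)
  let ?n = "sphere_normal X u \<times> sphere_normal X v"
  assume "\<nexists>p. rigid_triple X u v p"
  moreover have "0 \<in> space X" "1/2 \<in> space X" "\<i>/2 \<in> space X"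
    by (cases X; simp)+
  ultimately have "\<forall>p \<in> {0, 1/2, \<i>/2}. sphere_normal X p \<bullet> ?n = 0"
    using assms unfolding rigid_triple_def by blast
  then have "?n = 0"
    by (rule sphere_normals_span)
  then show False
    using sphere_normal_cross_nonzero assms by blast
qed

lemma eq_if_same_distances_to_rigid_triple:
  assumes uvp: "rigid_triple X u v p" and zw: "z \<in> space X" "w \<in> space X"
    and "gdist X w u = gdist X z u" "gdist X w v = gdist X z v" "gdist X w p = gdist X z p"
  shows "w = z"
proof -
  let ?n = "sphere_normal X u \<times> sphere_normal X v"
  let ?d = "lift X w - lift X z"
  have orth: "sphere_normal X a \<bullet> ?d = 0" if "a \<in> {u, v, p}" for a
    using that assms unfolding rigid_triple_def by (auto intro: equidistant_imp_sphere_normal_orthogonal)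
  define c where "c = ?n \<bullet> ?d / (?n \<bullet> ?n)"
  have "?n \<noteq> 0"
    using uvp unfolding rigid_triple_def by auto
  then have d: "?d = c *\<^sub>R ?n"
    unfolding c_def using orth by (intro orthogonal_both_imp_parallel_cross) auto
  then have "c * (sphere_normal X p \<bullet> ?n) = 0"
    using orth[of p] by (metis inner_scaleR_right insertCI)
  then have "c = 0"
    using uvp unfolding rigid_triple_def by simp
  then have "lift X w = lift X z"
    using d by simp
  then show "w = z"
    using inj_on_lift zw by (auto dest: inj_onD)
qed

lemma isometry_fixing_rigid_triple:
  assumes g: "isometry X g" and uvp: "rigid_triple X u v p"
    and fixed: "g u = u" "g v = v" "g p = p"
  shows "g = id"
proof
  fix z
  show "g z = id z"
  proof (cases "z \<in> space X")
    case True
    have "gdist X (g z) a = gdist X z a" if "a \<in> {u, v, p}" for a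
      using that fixed isometry_gdist[OF g True, of a] uvp unfolding rigid_triple_def by auto
    then show ?thesis
      using eq_if_same_distances_to_rigid_triple[OF uvp True isometry_maps_space[OF g True]] by simp
  next
    case False
    then show ?thesis
      using g unfolding isometry_def by simp
  qed
qed

lemma isom_subgroup_eq_if_agree_on_rigid_triple:
  assumes G: "isom_subgroup X G" and gh: "g \<in> G" "h \<in> G" and uvp: "rigid_triple X u v p"
    and agree: "h u = g u" "h v = g v" "h p = g p"
  shows "h = g"
proof -
  obtain g' where g': "g' \<in> G" "g' \<circ> g = id"
    using G gh unfolding isom_subgroup_def by blast
  have "isometry X (g' \<circ> h)" "isometry X g'"
    using G gh g' unfolding isom_subgroup_def by blast+
  moreover have "(g' \<circ> h) x = x" if "x \<in> {u, v, p}" for x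
    using that agree g'(2) by (auto simp: fun_eq_iff)
  ultimately have "g' \<circ> h = g' \<circ> g"
    using isometry_fixing_rigid_triple[OF _ uvp] g'(2) by simp
  with \<open>isometry X g'\<close> show ?thesis
    by (metis isometry_inj inj_eq fun_eq_iff comp_apply)
qed

section \<open>Discreteness\<close>

lemma gdist_small_imp_dist_small:
  assumes x: "x \<in> space X" and r: "r > 0"
  shows "\<exists>e>0. \<forall>y\<in>space X. gdist X y x < e \<longrightarrow> dist y x < r"
proof (cases X)
  case Euclidean
  then show ?thesis
    using r by auto
next
  case Hyperbolic
  define s where "s = 1 - (cmod x)\<^sup>2"
  have s: "s > 0"
    using x Hyperbolic one_minus_cmod_power2_pos unfolding s_def by simp
  define e where "e = arcosh (1 + 2 * r\<^sup>2 / s)"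
  have e: "e > 0" "cosh e = 1 + 2 * r\<^sup>2 / s"
    unfolding e_def using r s by simp_all
  have "dist y x < r" if y: "y \<in> space X" and close: "hyp_dist y x < e" for y
  proof -
    have xy: "cmod x < 1" "cmod y < 1"
      using x y Hyperbolic by simp_all
    have "0 < 1 - (cmod y)\<^sup>2"
      using one_minus_cmod_power2_pos[OF xy(2)] .
    then have "(1 - (cmod y)\<^sup>2) * s \<le> s"
      using s by (intro mult_left_le_one_le) simp_all
    then have "2 * (cmod (y - x))\<^sup>2 / s \<le> 2 * (cmod (y - x))\<^sup>2 / ((1 - (cmod y)\<^sup>2) * s)"
      using s \<open>0 < 1 - (cmod y)\<^sup>2\<close> by (intro divide_left_mono) simp_all
    also have "\<dots> = cosh (hyp_dist y x) - 1"
      using xy unfolding s_def by (simp add: cosh_hyp_dist)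
    also have "\<dots> < 2 * r\<^sup>2 / s"
      using close e cosh_real_nonneg_less_iff[OF hyp_dist_nonneg[OF xy(2,1)], of e] by simp
    finally have "(cmod (y - x))\<^sup>2 < r\<^sup>2"
      using s by (simp add: divide_less_cancel)
    then have "cmod (y - x) < r"
      using power2_less_imp_less[of "cmod (y - x)" r] r by simp
    then show ?thesis
      by (simp add: dist_norm)
  qed
  then show ?thesis
    using e(1) Hyperbolic by auto
qed

lemma locally_finite_vertices_isolated:
  assumes A: "locally_finite_vertices X A" "A \<subseteq> space X" and x: "x \<in> space X"
  shows "\<exists>e>0. \<forall>y\<in>A. gdist X y x < e \<longrightarrow> y = x"
proof -
  obtain r0 where r0: "r0 > 0" "cball x r0 \<subseteq> space X"
    using open_space x by (meson open_contains_cball)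
  moreover have "compact (cball x r0)"
    by simp
  ultimately have "finite (cball x r0 \<inter> A)"
    using A(1) unfolding locally_finite_vertices_def by blast
  then obtain \<delta> where \<delta>: "\<delta> > 0" "\<forall>y \<in> cball x r0 \<inter> A. y \<noteq> x \<longrightarrow> \<delta> \<le> dist x y"
    using finite_set_avoid by blast
  obtain e where e: "e > 0" "\<forall>y\<in>space X. gdist X y x < e \<longrightarrow> dist y x < min r0 \<delta>"
    using gdist_small_imp_dist_small[OF x, of "min r0 \<delta>"] r0(1) \<delta>(1) by auto
  have "y = x" if y: "y \<in> A" "gdist X y x < e" for y
  proof (rule ccontr)
    assume "y \<noteq> x"
    have "dist x y < min r0 \<delta>"
      using e(2) y A(2) by (metis dist_commute subsetD)
    then have "y \<in> cball x r0 \<inter> A" and "dist x y < \<delta>"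
      using y(1) by simp_all
    then show False
      using \<delta>(2) \<open>y \<noteq> x\<close> by fastforce
  qed
  with e show ?thesis
    by blast
qed

lemma isom_subgroup_eq_if_close_on_rigid_triple:
  assumes G: "isom_subgroup X G"
    and V: "V \<subseteq> space X" "locally_finite_vertices X V" "\<forall>g\<in>G. g ` V \<subseteq> V"
    and uv: "u \<in> V" "v \<in> V" and uvp: "rigid_triple X u v p" and g: "g \<in> G"
  shows "\<exists>e>0. \<forall>h\<in>G. (\<forall>x\<in>{u, v, p}. gdist X (h x) (g x) < e) \<longrightarrow> h = g"
proof -
  have iso: "\<And>h. h \<in> G \<Longrightarrow> isometry X h"
    using G unfolding isom_subgroup_def by blast
  have K: "{u, v, p} \<subseteq> space X" "u \<noteq> v"
    using uvp unfolding rigid_triple_def by auto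
  let ?C = "{w \<in> space X. gdist X w (g u) = gdist X p u \<and> gdist X w (g v) = gdist X p v}"
  have "g u \<noteq> g v"
    using K isometry_inj_on[OF iso[OF g]] by (auto dest: inj_onD)
  then have "finite ?C"
    using K isometry_maps_space[OF iso[OF g]] by (intro finite_two_circles_inter) auto
  then have "locally_finite_vertices X ?C"
    unfolding locally_finite_vertices_def by blast
  then obtain ep where ep: "ep > 0" "\<forall>w\<in>?C. gdist X w (g p) < ep \<longrightarrow> w = g p"
    using locally_finite_vertices_isolated isometry_maps_space[OF iso[OF g]] K by blast
  obtain eu where eu: "eu > 0" "\<forall>y\<in>V. gdist X y (g u) < eu \<longrightarrow> y = g u"
    using locally_finite_vertices_isolated V g uv by blast
  obtain ev where ev: "ev > 0" "\<forall>y\<in>V. gdist X y (g v) < ev \<longrightarrow> y = g v"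
    using locally_finite_vertices_isolated V g uv by blast
  have "h = g" if h: "h \<in> G" and close: "\<forall>x\<in>{u, v, p}. gdist X (h x) (g x) < min eu (min ev ep)" for h
  proof -
    have "h u \<in> V" "h v \<in> V"
      using V(3) h uv by auto
    then have "h u = g u" "h v = g v"
      using close eu ev by auto
    moreover have "h p \<in> ?C"
      using isometry_gdist[OF iso[OF h], of p] isometry_maps_space[OF iso[OF h], of p] K
      by (simp flip: \<open>h u = g u\<close> \<open>h v = g v\<close>)
    then have "h p = g p"
      using close ep by auto
    ultimately show "h = g"
      using isom_subgroup_eq_if_agree_on_rigid_triple G g h uvp by blast
  qed
  moreover have "min eu (min ev ep) > 0"
    using eu ev ep by simp
  ultimately show ?thesis
    by blast
qed

lemma discrete_isom_group_if_invariant_locally_finite: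
  assumes G: "isom_subgroup X G"
    and V: "V \<subseteq> space X" "locally_finite_vertices X V" "\<forall>g\<in>G. g ` V \<subseteq> V"
    and uv: "u \<in> V" "v \<in> V" "u \<noteq> v"
  shows "discrete_isom_group X G"
  unfolding discrete_isom_group_def
proof
  fix g assume "g \<in> G"
  obtain p where uvp: "rigid_triple X u v p"
    using rigid_triple_exists uv V(1) by blast
  then have "compact {u, v, p}" "{u, v, p} \<subseteq> space X"
    unfolding rigid_triple_def by auto
  moreover obtain e where "e > 0" "\<forall>h\<in>G. (\<forall>x\<in>{u, v, p}. gdist X (h x) (g x) < e) \<longrightarrow> h = g"
    using isom_subgroup_eq_if_close_on_rigid_triple[OF G V uv(1,2) uvp \<open>g \<in> G\<close>] by blast
  ultimately show "\<exists>K e. compact K \<and> K \<subseteq> space X \<and> e > 0 \<and>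
      (\<forall>h\<in>G. (\<forall>x\<in>K. gdist X (h x) (g x) < e) \<longrightarrow> h = g)"
    by blast
qed

theorem lemma2p4:
  fixes X :: geometry and V :: "complex set" and E :: "complex set set"
    and G :: "(complex \<Rightarrow> complex) set"
  assumes "is_map X V E"
    and "locally_finite_graph V E"
    and "one_ended V E"
    and "locally_finite_vertices X V"
    and "isom_subgroup X G"
    and "quasi_transitive G V E"
  shows "discrete_isom_group X G"
proof -
  have V: "V \<subseteq> space X" "infinite V"
    using assms(1) unfolding is_map_def by auto
  then obtain u where "u \<in> V"
    using infinite_imp_nonempty by blast
  moreover obtain v where "v \<in> V - {u}"
    using V(2) infinite_imp_nonempty[of "V - {u}"] by auto
  ultimately have "u \<in> V" "v \<in> V" "u \<noteq> v"
    by auto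
  moreover have "\<forall>g\<in>G. g ` V \<subseteq> V"
    using assms(6) unfolding quasi_transitive_def acts_on_map_def by blast
  ultimately show ?thesis
    using discrete_isom_group_if_invariant_locally_finite assms(4,5) V(1) by blast
qed

end
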